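(* Let $M=\langle n_1,n_2,n_3\rangle$ be a numerical monoid of embedding dimension three with minimal generators $n_1<n_2<n_3$. Then: (1) for all $(a,b,c)\in\mathsf{Z}(\alpha(M)n_2-n_1)$ we have $b=0$; (2) if $L(\alpha(M)n_2)\neq L(\alpha(M)n_2-n_1)+1$, then $L(\alpha(M)n_2)=\alpha(M)$; (3) $L(\alpha(M)n_2)\neq L(\alpha(M)n_2-n_1)+1$ if and only if for all $(a,b,c)\in\mathsf{Z}(\alpha(M)n_2)$ with $b=0$ we have $a+c<\alpha(M)$; (4) if $\alpha(M)=2$ or $\alpha(M)=n_1$, then $L(\alpha(M)n_2)=L(\alpha(M)n_2-n_1)+1$; (5) $\alpha(M)\leq n_1$. Analogously: (1') for all $(a,b,c)\in\mathsf{Z}(\beta(M)n_2-n_3)$ we have $b=0$; (2') if $\ell(\beta(M)n_2)\neq \ell(\beta(M)n_2-n_3)+1$, then $\ell(\beta(M)n_2)=\beta(M)$; (3') $\ell(\beta(M)n_2)\neq \ell(\beta(M)n_2-n_3)+1$ if and only if for all $(a,b,c)\in\mathsf{Z}(\beta(M)n_2)$ with $b=0$ we have $a+c>\beta(M)$; (4') if $\beta(M)=n_3$, then $\ell(\beta(M)n_2)=\ell(\beta(M)n_2-n_3)+1$; (5') $\beta(M)\leq n_3$.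
   Context: $\mathbb{N}$ denotes the nonnegative integers. A numerical monoid is a submonoid of $\mathbb{N}$ with finite complement. For $x\in M$, $\mathsf{Z}(x)=\{(a_1,a_2,a_3)\in\mathbb{N}^3\mid a_1n_1+a_2n_2+a_3n_3=x\}$; the length of a factorization is $a_1+a_2+a_3$; $L(x)$ and $\ell(x)$ are the maximum and minimum factorization lengths of $x$. Define $\alpha(M)=\min\{b\in\mathbb{N}\mid bn_2-n_1\in M\}$ and $\beta(M)=\min\{b\in\mathbb{N}\mid bn_2-n_3\in M\}$. *)

theory Defs
  imports Main
begin

inductive_set submonoid_gen :: "nat set \<Rightarrow> nat set" for A :: "nat set" where
  zero: "0 \<in> submonoid_gen A"
| gen: "a \<in> A \<Longrightarrow> a \<in> submonoid_gen A"
| add: "x \<in> submonoid_gen A \<Longrightarrow> y \<in> submonoid_gen A \<Longrightarrow> x + y \<in> submonoid_gen A"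

definition numerical_monoid :: "nat set \<Rightarrow> bool" where
  "numerical_monoid M \<longleftrightarrow> 0 \<in> M \<and> (\<forall>x\<in>M. \<forall>y\<in>M. x + y \<in> M) \<and> finite (UNIV - M)"

definition minimal_generating_set :: "nat set \<Rightarrow> nat set \<Rightarrow> bool" where
  "minimal_generating_set M A \<longleftrightarrow> submonoid_gen A = M \<and> (\<forall>B. B \<subset> A \<longrightarrow> submonoid_gen B \<noteq> M)"

definition Z :: "nat \<Rightarrow> nat \<Rightarrow> nat \<Rightarrow> nat \<Rightarrow> (nat \<times> nat \<times> nat) set" where
  "Z n1 n2 n3 x = {(a, b, c). a * n1 + b * n2 + c * n3 = x}"

definition fact_len :: "nat \<times> nat \<times> nat \<Rightarrow> nat" where
  "fact_len f = (case f of (a, b, c) \<Rightarrow> a + b + c)"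

definition maxlen :: "nat \<Rightarrow> nat \<Rightarrow> nat \<Rightarrow> nat \<Rightarrow> nat" where
  "maxlen n1 n2 n3 x = Max (fact_len ` Z n1 n2 n3 x)"

definition minlen :: "nat \<Rightarrow> nat \<Rightarrow> nat \<Rightarrow> nat \<Rightarrow> nat" where
  "minlen n1 n2 n3 x = Min (fact_len ` Z n1 n2 n3 x)"

(* alpha(M) = min { b | b*n2 - n1 \<in> M }, subtraction in Z, M \<subseteq> N *)
definition alpha :: "nat set \<Rightarrow> nat \<Rightarrow> nat \<Rightarrow> nat" where
  "alpha M n1 n2 = (LEAST b. n1 \<le> b * n2 \<and> b * n2 - n1 \<in> M)"

definition beta :: "nat set \<Rightarrow> nat \<Rightarrow> nat \<Rightarrow> nat" where
  "beta M n2 n3 = (LEAST b. n3 \<le> b * n2 \<and> b * n2 - n3 \<in> M)"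

end

theory Submission
  imports Defs
begin

(* Write k = alpha(M). By minimality of k, a factorization of k n2 - n1 using n2 would
   show that (k - 1) n2 - n1 lies in M; so no such factorization exists. A factorization of
   k n2 either uses n1, and then drops to a factorization of k n2 - n1, or uses only n2 and
   n3, and then (as n2 < n3) has length at most k, with equality for k copies of n2. Hence
   L(k n2) = max (L(k n2 - n1) + 1) k, from which the remaining claims are read off, and
   k <= n1 because n1 n2 - n1 = (n2 - 1) n1.
   beta(M) is alpha(M) for the generators in the order n3, n2, n1. Reading factorizations
   backwards, the same argument applies with the inequality n2 > n1 in place of n2 < n3,
   which turns the maximum length into the minimum length. *)

lemma submonoid_gen_subset:
  assumes "A \<subseteq> submonoid_gen B"
  shows "submonoid_gen A \<subseteq> submonoid_gen B"
proof
  fix x assume "x \<in> submonoid_gen A"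
  then show "x \<in> submonoid_gen B"
    by induction (use assms in \<open>auto intro: submonoid_gen.intros\<close>)
qed

lemma mult_in_submonoid_gen: "a \<in> A \<Longrightarrow> k * a \<in> submonoid_gen A"
  by (induction k) (auto intro: submonoid_gen.intros)

lemma minimal_generating_set_nonzero:
  assumes "minimal_generating_set M A"
  shows "0 \<notin> A"
proof
  assume "0 \<in> A"
  have "submonoid_gen A \<subseteq> submonoid_gen (A - {0})"
    by (rule submonoid_gen_subset) (auto intro: submonoid_gen.intros)
  moreover have "submonoid_gen (A - {0}) \<subseteq> submonoid_gen A"
    by (rule submonoid_gen_subset) (auto intro: submonoid_gen.gen)
  ultimately have "submonoid_gen (A - {0}) = M"
    using assms unfolding minimal_generating_set_def by blast
  moreover have "A - {0} \<subset> A"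
    using \<open>0 \<in> A\<close> by blast
  ultimately show False
    using assms unfolding minimal_generating_set_def by blast
qed

lemma Z_iff [simp]: "(a, b, c) \<in> Z n1 n2 n3 x \<longleftrightarrow> a * n1 + b * n2 + c * n3 = x"
  by (simp add: Z_def)

lemma fact_len_simp [simp]: "fact_len (a, b, c) = a + b + c"
  by (simp add: fact_len_def)

lemma submonoid_gen_three: "submonoid_gen {n1, n2, n3} = {x. Z n1 n2 n3 x \<noteq> {}}"
proof
  show "submonoid_gen {n1, n2, n3} \<subseteq> {x. Z n1 n2 n3 x \<noteq> {}}"
  proof
    fix x assume "x \<in> submonoid_gen {n1, n2, n3}"
    then show "x \<in> {x. Z n1 n2 n3 x \<noteq> {}}"
    proof induction
      case zero
      have "(0, 0, 0) \<in> Z n1 n2 n3 0" by simp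
      then show ?case by blast
    next
      case (gen a)
      then have "(1, 0, 0) \<in> Z n1 n2 n3 a \<or> (0, 1, 0) \<in> Z n1 n2 n3 a \<or> (0, 0, 1) \<in> Z n1 n2 n3 a"
        by auto
      then show ?case by blast
    next
      case (add x y)
      from add.IH obtain f f' where "f \<in> Z n1 n2 n3 x" "f' \<in> Z n1 n2 n3 y"
        by blast
      moreover obtain a b c a' b' c' where "f = (a, b, c)" "f' = (a', b', c')"
        by (cases f, cases f')
      ultimately have "(a + a', b + b', c + c') \<in> Z n1 n2 n3 (x + y)"
        by (simp add: algebra_simps)
      then show ?case by blast
    qed
  qed
  show "{x. Z n1 n2 n3 x \<noteq> {}} \<subseteq> submonoid_gen {n1, n2, n3}"
    by (auto simp: Z_def intro!: submonoid_gen.add mult_in_submonoid_gen)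
qed

lemma finite_Z:
  assumes "0 < n1" "0 < n2" "0 < n3"
  shows "finite (Z n1 n2 n3 x)"
proof -
  have "a \<le> x \<and> b \<le> x \<and> c \<le> x" if "(a, b, c) \<in> Z n1 n2 n3 x" for a b c
  proof -
    have "a * n1 + b * n2 + c * n3 = x"
      using that by simp
    moreover have "a \<le> a * n1" "b \<le> b * n2" "c \<le> c * n3"
      using assms by simp_all
    ultimately show ?thesis
      by linarith
  qed
  then have "Z n1 n2 n3 x \<subseteq> {..x} \<times> {..x} \<times> {..x}"
    by auto
  then show ?thesis
    by (rule finite_subset) simp
qed

lemma Z_swap_iff: "(a, b, c) \<in> Z n3 n2 n1 x \<longleftrightarrow> (c, b, a) \<in> Z n1 n2 n3 x"
  by (auto simp: algebra_simps)

lemma ball_Z_swap: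
  "(\<forall>(a, b, c) \<in> Z n3 n2 n1 x. P a b c) \<longleftrightarrow> (\<forall>(a, b, c) \<in> Z n1 n2 n3 x. P c b a)"
  by (metis (no_types, lifting) Z_swap_iff case_prodD case_prodI2)

lemma fact_len_Z_swap_subset: "fact_len ` Z n3 n2 n1 x \<subseteq> fact_len ` Z n1 n2 n3 x"
proof clarify
  fix a b c assume "(a, b, c) \<in> Z n3 n2 n1 x"
  then have "(c, b, a) \<in> Z n1 n2 n3 x"
    by (simp only: Z_swap_iff)
  then show "fact_len (a, b, c) \<in> fact_len ` Z n1 n2 n3 x"
    by (rule rev_image_eqI) simp
qed

lemma minlen_swap: "minlen n3 n2 n1 x = minlen n1 n2 n3 x"
  using fact_len_Z_swap_subset[of n3 n2 n1 x] fact_len_Z_swap_subset[of n1 n2 n3 x]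
  by (simp add: minlen_def)

lemma Z_mult_minus_self: "(n - 1, 0, 0) \<in> Z g n h (g * n - g)"
  by (simp add: diff_mult_distrib2 mult.commute)

lemma Z_Suc_first_iff: "g \<le> x \<Longrightarrow> (Suc a, b, c) \<in> Z g n h x \<longleftrightarrow> (a, b, c) \<in> Z g n h (x - g)"
  by (simp add: add.assoc) linarith

lemma maxlen_ge: "finite (Z n1 n2 n3 x) \<Longrightarrow> f \<in> Z n1 n2 n3 x \<Longrightarrow> fact_len f \<le> maxlen n1 n2 n3 x"
  unfolding maxlen_def by simp

lemma minlen_le: "finite (Z n1 n2 n3 x) \<Longrightarrow> f \<in> Z n1 n2 n3 x \<Longrightarrow> minlen n1 n2 n3 x \<le> fact_len f"
  unfolding minlen_def by simp

lemma maxlen_attained: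
  assumes "finite (Z n1 n2 n3 x)" "Z n1 n2 n3 x \<noteq> {}"
  obtains a b c where "(a, b, c) \<in> Z n1 n2 n3 x" "a + b + c = maxlen n1 n2 n3 x"
proof -
  have "maxlen n1 n2 n3 x \<in> fact_len ` Z n1 n2 n3 x"
    unfolding maxlen_def using assms by (intro Max_in) auto
  then obtain f where f: "f \<in> Z n1 n2 n3 x" "maxlen n1 n2 n3 x = fact_len f" ..
  obtain a b c where "f = (a, b, c)"
    by (cases f)
  with f show ?thesis
    using that by simp
qed

lemma minlen_attained:
  assumes "finite (Z n1 n2 n3 x)" "Z n1 n2 n3 x \<noteq> {}"
  obtains a b c where "(a, b, c) \<in> Z n1 n2 n3 x" "a + b + c = minlen n1 n2 n3 x"
proof -
  have "minlen n1 n2 n3 x \<in> fact_len ` Z n1 n2 n3 x"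
    unfolding minlen_def using assms by (intro Min_in) auto
  then obtain f where f: "f \<in> Z n1 n2 n3 x" "minlen n1 n2 n3 x = fact_len f" ..
  obtain a b c where "f = (a, b, c)"
    by (cases f)
  with f show ?thesis
    using that by simp
qed

lemma two_generator_length_le:
  fixes b c k n h :: nat
  assumes "b * n + c * h = k * n" "n \<le> h" "0 < n"
  shows "b + c \<le> k"
proof -
  have "c * n \<le> c * h"
    using assms(2) by (rule mult_le_mono2)
  then have "(b + c) * n \<le> k * n"
    unfolding add_mult_distrib using assms(1) by linarith
  then show ?thesis
    using assms(3) by simp
qed

lemma two_generator_length_ge:
  fixes b c k n h :: nat
  assumes "b * n + c * h = k * n" "h \<le> n" "0 < n"
  shows "k \<le> b + c"
proof -
  have "c * h \<le> c * n"
    using assms(2) by (rule mult_le_mono2)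
  then have "k * n \<le> (b + c) * n"
    unfolding add_mult_distrib using assms(1) by linarith
  then show ?thesis
    using assms(3) by simp
qed

lemma alpha_spec:
  fixes g n h :: nat
  assumes "0 < n"
  defines "k \<equiv> alpha (submonoid_gen {g, n, h}) g n"
  shows "k \<le> g" and "g \<le> k * n" and "Z g n h (k * n - g) \<noteq> {}"
proof -
  define P where "P b \<longleftrightarrow> g \<le> b * n \<and> Z g n h (b * n - g) \<noteq> {}" for b
  have k: "k = (LEAST b. P b)"
    unfolding k_def alpha_def P_def submonoid_gen_three by simp
  have "Z g n h (g * n - g) \<noteq> {}"
    using Z_mult_minus_self by blast
  with assms(1) have "P g"
    unfolding P_def by simp
  then show "k \<le> g"
    unfolding k by (rule Least_le)
  from \<open>P g\<close> have "P k"
    unfolding k by (rule LeastI)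
  then show "g \<le> k * n" "Z g n h (k * n - g) \<noteq> {}"
    unfolding P_def by simp_all
qed

lemma alpha_middle_coefficient_zero:
  assumes "0 < n" and "(a, b, c) \<in> Z g n h (alpha (submonoid_gen {g, n, h}) g n * n - g)"
  shows "b = 0"
proof (rule ccontr)
  let ?k = "alpha (submonoid_gen {g, n, h}) g n"
  assume "b \<noteq> 0"
  then obtain b' where b: "b = Suc b'"
    using not0_implies_Suc by blast
  have "g \<le> ?k * n"
    using alpha_spec(2)[OF assms(1)] .
  then have sum: "a * g + b' * n + c * h + n + g = ?k * n"
    using assms(2) b by simp
  have "?k \<noteq> 0"
    using sum assms(1) by (intro notI) simp
  then obtain j where j: "?k = Suc j"
    using not0_implies_Suc by blast
  have "a * g + b' * n + c * h + g = j * n"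
    using sum unfolding j by simp
  then have "(a, b', c) \<in> Z g n h (j * n - g)" and "g \<le> j * n"
    by simp_all
  then have "?k \<le> j"
    unfolding alpha_def submonoid_gen_three by (intro Least_le) blast
  then show False
    using j by simp
qed

lemma maxlen_shifted_multiple:
  assumes pos: "0 < g" "0 < n" "0 < h" and "n \<le> h"
    and shift: "g \<le> k * n" and ne: "Z g n h (k * n - g) \<noteq> {}"
  shows "maxlen g n h (k * n) = max (maxlen g n h (k * n - g) + 1) k"
proof -
  have fin: "finite (Z g n h x)" for x
    using pos by (rule finite_Z)
  obtain a0 b0 c0 where f0: "(a0, b0, c0) \<in> Z g n h (k * n - g)"
      "a0 + b0 + c0 = maxlen g n h (k * n - g)"
    using fin ne by (rule maxlen_attained)
  then have shifted: "(Suc a0, b0, c0) \<in> Z g n h (k * n)"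
    using Z_Suc_first_iff[OF shift] by blast
  have "maxlen g n h (k * n - g) + 1 \<le> maxlen g n h (k * n)"
    using maxlen_ge[OF fin shifted] f0(2) by simp
  moreover have "k \<le> maxlen g n h (k * n)"
    using maxlen_ge[OF fin, of "(0, k, 0)"] by simp
  moreover have "maxlen g n h (k * n) \<le> max (maxlen g n h (k * n - g) + 1) k"
  proof -
    have "Z g n h (k * n) \<noteq> {}"
      using shifted by blast
    then obtain a b c where f: "(a, b, c) \<in> Z g n h (k * n)" "a + b + c = maxlen g n h (k * n)"
      by (rule maxlen_attained[OF fin])
    show ?thesis
    proof (cases a)
      case 0
      then have "b + c \<le> k"
        using f(1) two_generator_length_le[OF _ \<open>n \<le> h\<close> pos(2)] by simp
      then show ?thesis
        using f(2) 0 by simp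
    next
      case (Suc a')
      then have "(a', b, c) \<in> Z g n h (k * n - g)"
        using f(1) Z_Suc_first_iff[OF shift] by blast
      then show ?thesis
        using maxlen_ge[OF fin] f(2) Suc by fastforce
    qed
  qed
  ultimately show ?thesis
    by linarith
qed

lemma minlen_shifted_multiple:
  assumes pos: "0 < g" "0 < n" "0 < h" and "h \<le> n"
    and shift: "g \<le> k * n" and ne: "Z g n h (k * n - g) \<noteq> {}"
  shows "minlen g n h (k * n) = min (minlen g n h (k * n - g) + 1) k"
proof -
  have fin: "finite (Z g n h x)" for x
    using pos by (rule finite_Z)
  obtain a0 b0 c0 where f0: "(a0, b0, c0) \<in> Z g n h (k * n - g)"
      "a0 + b0 + c0 = minlen g n h (k * n - g)"
    using fin ne by (rule minlen_attained)
  then have shifted: "(Suc a0, b0, c0) \<in> Z g n h (k * n)"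
    using Z_Suc_first_iff[OF shift] by blast
  have "minlen g n h (k * n) \<le> minlen g n h (k * n - g) + 1"
    using minlen_le[OF fin shifted] f0(2) by simp
  moreover have "minlen g n h (k * n) \<le> k"
    using minlen_le[OF fin, of "(0, k, 0)"] by simp
  moreover have "min (minlen g n h (k * n - g) + 1) k \<le> minlen g n h (k * n)"
  proof -
    have "Z g n h (k * n) \<noteq> {}"
      using shifted by blast
    then obtain a b c where f: "(a, b, c) \<in> Z g n h (k * n)" "a + b + c = minlen g n h (k * n)"
      by (rule minlen_attained[OF fin])
    show ?thesis
    proof (cases a)
      case 0
      then have "k \<le> b + c"
        using f(1) two_generator_length_ge[OF _ \<open>h \<le> n\<close> pos(2)] by simp
      then show ?thesis
        using f(2) 0 by simp
    next
      case (Suc a')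
      then have "(a', b, c) \<in> Z g n h (k * n - g)"
        using f(1) Z_Suc_first_iff[OF shift] by blast
      then show ?thesis
        using minlen_le[OF fin] f(2) Suc by fastforce
    qed
  qed
  ultimately show ?thesis
    by linarith
qed

lemma maxlen_shifted_multiple_short:
  assumes pos: "0 < g" "0 < n" "0 < h" and "n < h" and shift: "g \<le> k * n"
    and less: "maxlen g n h (k * n - g) + 1 < k" and f: "(a, 0, c) \<in> Z g n h (k * n)"
  shows "a + c < k"
proof (cases a)
  case 0
  then have eq: "0 * n + c * h = k * n"
    using f by simp
  have "c \<le> k"
    using two_generator_length_le[OF eq] \<open>n < h\<close> pos(2) by simp
  moreover have "c \<noteq> k"
    using eq less \<open>n < h\<close> by auto
  ultimately show ?thesis
    using 0 by simp
next
  case (Suc a')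
  then have "(a', 0, c) \<in> Z g n h (k * n - g)"
    using f Z_Suc_first_iff[OF shift] by blast
  then have "a' + c \<le> maxlen g n h (k * n - g)"
    using maxlen_ge[OF finite_Z[OF pos]] by fastforce
  then show ?thesis
    using less Suc by simp
qed

lemma minlen_shifted_multiple_long:
  assumes pos: "0 < g" "0 < n" "0 < h" and "h < n" and shift: "g \<le> k * n"
    and less: "k < minlen g n h (k * n - g) + 1" and f: "(a, 0, c) \<in> Z g n h (k * n)"
  shows "a + c > k"
proof (cases a)
  case 0
  then have eq: "0 * n + c * h = k * n"
    using f by simp
  have "k \<noteq> 0"
    using shift pos(1) by (intro notI) simp
  have "k \<le> c"
    using two_generator_length_ge[OF eq] \<open>h < n\<close> pos(2) by simp
  moreover have "c \<noteq> k"
    using eq \<open>k \<noteq> 0\<close> \<open>h < n\<close> by auto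
  ultimately show ?thesis
    using 0 by simp
next
  case (Suc a')
  then have "(a', 0, c) \<in> Z g n h (k * n - g)"
    using f Z_Suc_first_iff[OF shift] by blast
  then have "minlen g n h (k * n - g) \<le> a' + c"
    using minlen_le[OF finite_Z[OF pos]] by fastforce
  then show ?thesis
    using less Suc by simp
qed

lemma maxlen_shifted_multiple_ne_iff:
  assumes pos: "0 < g" "0 < n" "0 < h" and "n < h"
    and shift: "g \<le> k * n" and ne: "Z g n h (k * n - g) \<noteq> {}"
    and middle: "\<forall>(a, b, c) \<in> Z g n h (k * n - g). b = 0"
  shows "maxlen g n h (k * n) \<noteq> maxlen g n h (k * n - g) + 1
    \<longleftrightarrow> (\<forall>(a, b, c) \<in> Z g n h (k * n). b = 0 \<longrightarrow> a + c < k)"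
proof -
  have "(\<forall>(a, b, c) \<in> Z g n h (k * n). b = 0 \<longrightarrow> a + c < k) \<longleftrightarrow> maxlen g n h (k * n - g) + 1 < k"
  proof
    assume bound: "\<forall>(a, b, c) \<in> Z g n h (k * n). b = 0 \<longrightarrow> a + c < k"
    obtain a0 b0 c0 where f0: "(a0, b0, c0) \<in> Z g n h (k * n - g)"
        "a0 + b0 + c0 = maxlen g n h (k * n - g)"
      by (rule maxlen_attained[OF finite_Z[OF pos] ne])
    have "b0 = 0"
      using middle f0(1) by blast
    then have "(Suc a0, 0, c0) \<in> Z g n h (k * n)"
      using f0(1) Z_Suc_first_iff[OF shift] by blast
    then show "maxlen g n h (k * n - g) + 1 < k"
      using bound f0(2) \<open>b0 = 0\<close> by fastforce
  qed (use maxlen_shifted_multiple_short[OF pos \<open>n < h\<close> shift] in blast)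
  then show ?thesis
    using maxlen_shifted_multiple[OF pos less_imp_le[OF \<open>n < h\<close>] shift ne] by auto
qed

lemma minlen_shifted_multiple_ne_iff:
  assumes pos: "0 < g" "0 < n" "0 < h" and "h < n"
    and shift: "g \<le> k * n" and ne: "Z g n h (k * n - g) \<noteq> {}"
    and middle: "\<forall>(a, b, c) \<in> Z g n h (k * n - g). b = 0"
  shows "minlen g n h (k * n) \<noteq> minlen g n h (k * n - g) + 1
    \<longleftrightarrow> (\<forall>(a, b, c) \<in> Z g n h (k * n). b = 0 \<longrightarrow> a + c > k)"
proof -
  have "(\<forall>(a, b, c) \<in> Z g n h (k * n). b = 0 \<longrightarrow> a + c > k) \<longleftrightarrow> k < minlen g n h (k * n - g) + 1"
  proof
    assume bound: "\<forall>(a, b, c) \<in> Z g n h (k * n). b = 0 \<longrightarrow> a + c > k"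
    obtain a0 b0 c0 where f0: "(a0, b0, c0) \<in> Z g n h (k * n - g)"
        "a0 + b0 + c0 = minlen g n h (k * n - g)"
      by (rule minlen_attained[OF finite_Z[OF pos] ne])
    have "b0 = 0"
      using middle f0(1) by blast
    then have "(Suc a0, 0, c0) \<in> Z g n h (k * n)"
      using f0(1) Z_Suc_first_iff[OF shift] by blast
    then show "k < minlen g n h (k * n - g) + 1"
      using bound f0(2) \<open>b0 = 0\<close> by fastforce
  qed (use minlen_shifted_multiple_long[OF pos \<open>h < n\<close> shift] in blast)
  then show ?thesis
    using minlen_shifted_multiple[OF pos less_imp_le[OF \<open>h < n\<close>] shift ne] by auto
qed

lemma maxlen_pos:
  assumes "finite (Z n1 n2 n3 x)" "Z n1 n2 n3 x \<noteq> {}" "0 < x"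
  shows "0 < maxlen n1 n2 n3 x"
proof -
  obtain a b c where "(a, b, c) \<in> Z n1 n2 n3 x" "a + b + c = maxlen n1 n2 n3 x"
    using assms(1,2) by (rule maxlen_attained)
  then show ?thesis
    using assms(3) by (cases "a + b + c") auto
qed

lemma alpha_maxlen_properties:
  fixes g n h :: nat
  assumes "0 < g" "g < n" "n < h"
  defines "k \<equiv> alpha (submonoid_gen {g, n, h}) g n"
  shows "(\<forall>(a, b, c) \<in> Z g n h (k * n - g). b = 0)
    \<and> (maxlen g n h (k * n) \<noteq> maxlen g n h (k * n - g) + 1 \<longrightarrow> maxlen g n h (k * n) = k)
    \<and> (maxlen g n h (k * n) \<noteq> maxlen g n h (k * n - g) + 1
         \<longleftrightarrow> (\<forall>(a, b, c) \<in> Z g n h (k * n). b = 0 \<longrightarrow> a + c < k))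
    \<and> ((k = 2 \<or> k = g) \<longrightarrow> maxlen g n h (k * n) = maxlen g n h (k * n - g) + 1)
    \<and> k \<le> g"
proof -
  have pos: "0 < g" "0 < n" "0 < h"
    using assms(1-3) by simp_all
  have fin: "finite (Z g n h x)" for x
    using pos by (rule finite_Z)
  note spec = alpha_spec[OF pos(2), of g h, folded k_def]
  have middle: "\<forall>(a, b, c) \<in> Z g n h (k * n - g). b = 0"
    using alpha_middle_coefficient_zero[OF pos(2)] unfolding k_def by blast
  note max_eq = maxlen_shifted_multiple[OF pos less_imp_le[OF assms(3)] spec(2,3)]
  have small: "k \<le> maxlen g n h (k * n - g) + 1" if "k = 2 \<or> k = g"
    using that
  proof
    assume "k = 2"
    then have "0 < maxlen g n h (k * n - g)"
      using maxlen_pos[OF fin spec(3)] assms(2) by simp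
    then show ?thesis
      using \<open>k = 2\<close> by simp
  next
    assume "k = g"
    then have "n - 1 \<le> maxlen g n h (k * n - g)"
      using maxlen_ge[OF fin Z_mult_minus_self] by simp
    then show ?thesis
      using \<open>k = g\<close> assms(2) by simp
  qed
  have "maxlen g n h (k * n) = maxlen g n h (k * n - g) + 1" if "k = 2 \<or> k = g"
    using max_eq max_absorb1[OF small[OF that]] by simp
  moreover have "maxlen g n h (k * n) \<noteq> maxlen g n h (k * n - g) + 1 \<longrightarrow> maxlen g n h (k * n) = k"
    using max_eq by (simp add: max_def)
  ultimately show ?thesis
    using spec(1) middle maxlen_shifted_multiple_ne_iff[OF pos assms(3) spec(2,3) middle]
    by blast
qed

lemma alpha_minlen_properties:
  fixes g n h :: nat
  assumes "0 < h" "h < n" "n < g"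
  defines "k \<equiv> alpha (submonoid_gen {g, n, h}) g n"
  shows "(\<forall>(a, b, c) \<in> Z g n h (k * n - g). b = 0)
    \<and> (minlen g n h (k * n) \<noteq> minlen g n h (k * n - g) + 1 \<longrightarrow> minlen g n h (k * n) = k)
    \<and> (minlen g n h (k * n) \<noteq> minlen g n h (k * n - g) + 1
         \<longleftrightarrow> (\<forall>(a, b, c) \<in> Z g n h (k * n). b = 0 \<longrightarrow> a + c > k))
    \<and> (k = g \<longrightarrow> minlen g n h (k * n) = minlen g n h (k * n - g) + 1)
    \<and> k \<le> g"
proof -
  have pos: "0 < g" "0 < n" "0 < h"
    using assms(1-3) by simp_all
  have fin: "finite (Z g n h x)" for x
    using pos by (rule finite_Z)
  note spec = alpha_spec[OF pos(2), of g h, folded k_def]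
  have middle: "\<forall>(a, b, c) \<in> Z g n h (k * n - g). b = 0"
    using alpha_middle_coefficient_zero[OF pos(2)] unfolding k_def by blast
  note min_eq = minlen_shifted_multiple[OF pos less_imp_le[OF assms(2)] spec(2,3)]
  have small: "minlen g n h (k * n - g) + 1 \<le> k" if "k = g"
  proof -
    have "minlen g n h (k * n - g) \<le> n - 1"
      using minlen_le[OF fin Z_mult_minus_self] that by simp
    then show ?thesis
      using that assms(3) by simp
  qed
  have "minlen g n h (k * n) = minlen g n h (k * n - g) + 1" if "k = g"
    using min_eq min_absorb1[OF small[OF that]] by simp
  moreover have "minlen g n h (k * n) \<noteq> minlen g n h (k * n - g) + 1 \<longrightarrow> minlen g n h (k * n) = k"
    using min_eq by (simp add: min_def)
  ultimately show ?thesis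
    using spec(1) middle minlen_shifted_multiple_ne_iff[OF pos assms(2) spec(2,3) middle]
    by blast
qed

theorem mainTheorem6:
  fixes M :: "nat set" and n1 n2 n3 :: nat
  assumes "numerical_monoid M"
    and "minimal_generating_set M {n1, n2, n3}"
    and "n1 < n2" and "n2 < n3"
  defines "\<alpha> \<equiv> alpha M n1 n2" and "\<beta> \<equiv> beta M n2 n3"
  shows "(\<forall>(a, b, c) \<in> Z n1 n2 n3 (\<alpha> * n2 - n1). b = 0)
    \<and> (maxlen n1 n2 n3 (\<alpha> * n2) \<noteq> maxlen n1 n2 n3 (\<alpha> * n2 - n1) + 1
         \<longrightarrow> maxlen n1 n2 n3 (\<alpha> * n2) = \<alpha>)
    \<and> (maxlen n1 n2 n3 (\<alpha> * n2) \<noteq> maxlen n1 n2 n3 (\<alpha> * n2 - n1) + 1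
         \<longleftrightarrow> (\<forall>(a, b, c) \<in> Z n1 n2 n3 (\<alpha> * n2). b = 0 \<longrightarrow> a + c < \<alpha>))
    \<and> ((\<alpha> = 2 \<or> \<alpha> = n1) \<longrightarrow> maxlen n1 n2 n3 (\<alpha> * n2) = maxlen n1 n2 n3 (\<alpha> * n2 - n1) + 1)
    \<and> \<alpha> \<le> n1
    \<and> (\<forall>(a, b, c) \<in> Z n1 n2 n3 (\<beta> * n2 - n3). b = 0)
    \<and> (minlen n1 n2 n3 (\<beta> * n2) \<noteq> minlen n1 n2 n3 (\<beta> * n2 - n3) + 1
         \<longrightarrow> minlen n1 n2 n3 (\<beta> * n2) = \<beta>)
    \<and> (minlen n1 n2 n3 (\<beta> * n2) \<noteq> minlen n1 n2 n3 (\<beta> * n2 - n3) + 1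
         \<longleftrightarrow> (\<forall>(a, b, c) \<in> Z n1 n2 n3 (\<beta> * n2). b = 0 \<longrightarrow> a + c > \<beta>))
    \<and> (\<beta> = n3 \<longrightarrow> minlen n1 n2 n3 (\<beta> * n2) = minlen n1 n2 n3 (\<beta> * n2 - n3) + 1)
    \<and> \<beta> \<le> n3"
proof -
  have "0 \<notin> {n1, n2, n3}"
    using assms(2) by (rule minimal_generating_set_nonzero)
  then have "0 < n1"
    by simp
  have M: "M = submonoid_gen {n1, n2, n3}"
    using assms(2) by (simp add: minimal_generating_set_def)
  have "\<alpha> = alpha (submonoid_gen {n1, n2, n3}) n1 n2"
    by (simp add: \<alpha>_def M)
  moreover have "\<beta> = alpha (submonoid_gen {n3, n2, n1}) n3 n2"
    by (simp add: \<beta>_def M beta_def alpha_def insert_commute)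
  ultimately show ?thesis
    using alpha_maxlen_properties[OF \<open>0 < n1\<close> assms(3,4)]
      alpha_minlen_properties[OF \<open>0 < n1\<close> assms(3,4)]
    unfolding ball_Z_swap[of n3 n2 n1] minlen_swap[of n3 n2 n1]
    by (simp add: add.commute)
qed

end
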